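(* Let $\boldsymbol{\beta}=(\beta_1,\dots,\beta_p)$ be an alternate base and $\delta=\prod_{i=1}^p\beta_i$. Suppose there exists $\gamma>0$ such that every rational number in $[0,\gamma)$ has an eventually periodic $\boldsymbol{\beta}$-expansion. Then $\delta$ is an algebraic integer.
   Context: An alternate base is a $p$-tuple $\boldsymbol{\beta}=(\beta_1,\dots,\beta_p)$ of reals $\beta_i>1$, identified with the purely periodic sequence $(\beta_k)_{k\ge1}$, $\beta_{k+p}=\beta_k$. For $x\in[0,1)$ the $\boldsymbol{\beta}$-expansion $d_{\boldsymbol{\beta}}(x)=a_1a_2\cdots$ is given by the greedy algorithm $r_0=x$, $a_{k+1}=\lfloor\beta_{k+1}r_k\rfloor$, $r_{k+1}=\beta_{k+1}r_k-a_{k+1}$, so $x=\sum_{k\ge1}a_k/\prod_{i=1}^k\beta_i$. *)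

theory Defs
  imports "HOL-Analysis.Analysis" "HOL-Computational_Algebra.Polynomial"
begin

text \<open>An alternate base is a nonempty list bs = [beta_1, ..., beta_p] of reals > 1,
  identified with the periodic sequence beta_k = bs ! ((k-1) mod p), k >= 1.\<close>

definition alt_base :: "real list \<Rightarrow> bool" where
  "alt_base bs \<longleftrightarrow> bs \<noteq> [] \<and> (\<forall>b\<in>set bs. b > 1)"

text \<open>alt_beta bs k = beta_(k+1), i.e. 0-based indexing of the periodic sequence.\<close>
definition alt_beta :: "real list \<Rightarrow> nat \<Rightarrow> real" where
  "alt_beta bs k = bs ! (k mod length bs)"

fun alt_rem :: "real list \<Rightarrow> real \<Rightarrow> nat \<Rightarrow> real" where
  "alt_rem bs x 0 = x"
| "alt_rem bs x (Suc k) = alt_beta bs k * alt_rem bs x k - of_int \<lfloor>alt_beta bs k * alt_rem bs x k\<rfloor>"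

text \<open>Digits: alt_digit bs x k = a_(k+1) = floor(beta_(k+1) r_k).\<close>
definition alt_digit :: "real list \<Rightarrow> real \<Rightarrow> nat \<Rightarrow> int" where
  "alt_digit bs x k = \<lfloor>alt_beta bs k * alt_rem bs x k\<rfloor>"

definition eventually_periodic :: "(nat \<Rightarrow> 'a) \<Rightarrow> bool" where
  "eventually_periodic a \<longleftrightarrow> (\<exists>N T. T > 0 \<and> (\<forall>n\<ge>N. a (n + T) = a n))"

end

(*
  For a finite set X of rationals, collect the greedy remainders
  r_n(x), x in X, according to the residue of n modulo p. Eventually periodic expansions make each
  class R_s finite, and one step of the greedy algorithm, beta_(n+1) r_n = r_(n+1) + a_(n+1), maps
  the integer span of R_s into that of R_(s+1), provided 1 lies in every span. Going once around
  the period, delta maps the finitely generated Z-module spanned by R_0 into itself, so delta is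
  an eigenvalue of an integer matrix and hence an algebraic integer. To get 1 into the spans, take
  x = 1/q and y = m/q so small that y produces its first nonzero digit at a prescribed position
  while x does not; there m r(x) - r(y) = 1.
*)

theory Submission imports Defs "Jordan_Normal_Form.Char_Poly" begin

section \<open>Integer spans and algebraic integers\<close>

definition int_span :: "'a::comm_ring_1 set \<Rightarrow> 'a set" where
  "int_span G = {y. \<exists>c::'a \<Rightarrow> int. y = (\<Sum>g\<in>G. of_int (c g) * g)}"

lemma int_span_0: "0 \<in> int_span G"
  unfolding int_span_def by (auto intro!: exI[of _ "\<lambda>_. 0"])

lemma int_span_base:
  assumes "finite G" "g \<in> G"
  shows "g \<in> int_span G"
proof -
  have "(\<Sum>h\<in>G. of_int (if h = g then 1 else 0) * h) = (\<Sum>h\<in>G. if h = g then h else 0)"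
    by (intro sum.cong) auto
  also have "\<dots> = g"
    using assms by simp
  finally show ?thesis
    unfolding int_span_def by (intro CollectI exI[of _ "\<lambda>h. if h = g then 1 else 0"]) simp
qed

lemma int_span_add:
  assumes "a \<in> int_span G" "b \<in> int_span G"
  shows "a + b \<in> int_span G"
proof -
  obtain c1 c2 where "a = (\<Sum>g\<in>G. of_int (c1 g) * g)" "b = (\<Sum>g\<in>G. of_int (c2 g) * g)"
    using assms unfolding int_span_def by blast
  then have "a + b = (\<Sum>g\<in>G. of_int (c1 g + c2 g) * g)"
    by (simp add: sum.distrib distrib_right)
  then show ?thesis
    unfolding int_span_def by (intro CollectI exI[of _ "\<lambda>g. c1 g + c2 g"])
qed

lemma int_span_of_int_mult:
  assumes "a \<in> int_span G"
  shows "of_int k * a \<in> int_span G"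
proof -
  obtain c where "a = (\<Sum>g\<in>G. of_int (c g) * g)"
    using assms unfolding int_span_def by blast
  then have "of_int k * a = (\<Sum>g\<in>G. of_int (k * c g) * g)"
    by (simp add: sum_distrib_left mult.assoc)
  then show ?thesis
    unfolding int_span_def by (intro CollectI exI[of _ "\<lambda>g. k * c g"])
qed

lemma int_span_diff:
  assumes "a \<in> int_span G" "b \<in> int_span G"
  shows "a - b \<in> int_span G"
  using int_span_add[OF assms(1) int_span_of_int_mult[OF assms(2), of "-1"]] by simp

lemma int_span_sum: "(\<And>i. i \<in> A \<Longrightarrow> f i \<in> int_span G) \<Longrightarrow> sum f A \<in> int_span G"
  by (induction A rule: infinite_finite_induct) (auto simp: int_span_0 int_span_add)

lemma int_span_mult_closed:
  assumes "\<And>g. g \<in> G \<Longrightarrow> d * g \<in> int_span K" "y \<in> int_span G"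
  shows "d * y \<in> int_span K"
proof -
  obtain c where "y = (\<Sum>g\<in>G. of_int (c g) * g)"
    using assms(2) unfolding int_span_def by blast
  then have "d * y = (\<Sum>g\<in>G. of_int (c g) * (d * g))"
    by (simp add: sum_distrib_left algebra_simps)
  also have "\<dots> \<in> int_span K"
    by (intro int_span_sum int_span_of_int_mult assms(1))
  finally show ?thesis .
qed

lemma int_span_nonzero_imp_nonzero_base:
  assumes "y \<in> int_span G" "y \<noteq> 0"
  obtains g where "g \<in> G" "g \<noteq> 0"
  using assms unfolding int_span_def by (force intro: sum.neutral)

lemma algebraic_int_if_eigenvalue_of_int_mat:
  fixes d :: "'a::field_char_0"
  assumes A: "A \<in> carrier_mat m m" and eig: "eigenvalue (map_mat of_int A) d"
  shows "algebraic_int d"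
proof -
  have "map_mat of_int A \<in> carrier_mat m m"
    using A by simp
  then have "poly (char_poly (map_mat of_int A)) d = 0"
    using eig eigenvalue_root_char_poly by blast
  moreover have "char_poly (map_mat (of_int :: int \<Rightarrow> 'a) A) = of_int_poly (char_poly A)"
    using of_int_hom.char_poly_hom[OF A] by simp
  moreover have "lead_coeff (char_poly A) = 1"
    using degree_monic_char_poly[OF A] by simp
  ultimately show ?thesis
    unfolding algebraic_int_altdef_ipoly by metis
qed

text \<open>The coefficient matrix of multiplication by d with respect to an enumeration of the
  generators has the vector of generators as an eigenvector with eigenvalue d.\<close>
lemma algebraic_int_if_int_span_stable:
  fixes G :: "'a::field_char_0 set"
  assumes fin: "finite G" and stable: "\<And>g. g \<in> G \<Longrightarrow> d * g \<in> int_span G"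
    and g0: "g0 \<in> G" "g0 \<noteq> 0"
  shows "algebraic_int d"
proof -
  obtain xs where xs: "distinct xs" "set xs = G"
    using finite_distinct_list[OF fin] by blast
  define m where "m = length xs"
  have sum_G: "(\<Sum>g\<in>G. h g) = (\<Sum>j<m. h (xs ! j))" for h :: "'a \<Rightarrow> 'a"
    using sum.distinct_set_conv_list[OF xs(1), of h] xs(2)
    by (simp add: sum_list_sum_nth m_def atLeast0LessThan)
  have "\<forall>i\<in>{..<m}. \<exists>c::'a \<Rightarrow> int. d * xs ! i = (\<Sum>g\<in>G. of_int (c g) * g)"
    using stable xs unfolding int_span_def m_def by auto
  then obtain c where c: "\<forall>i\<in>{..<m}. d * xs ! i = (\<Sum>g\<in>G. of_int (c i g) * g)"
    by (metis (no_types) bchoice)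
  define A :: "int mat" where "A = mat m m (\<lambda>(i, j). c i (xs ! j))"
  define v :: "'a vec" where "v = vec m (\<lambda>j. xs ! j)"
  have A: "A \<in> carrier_mat m m"
    unfolding A_def by auto
  have "map_mat of_int A *\<^sub>v v = d \<cdot>\<^sub>v v"
  proof (rule eq_vecI)
    fix i assume "i < dim_vec (d \<cdot>\<^sub>v v)"
    then have i: "i < m" by (simp add: v_def)
    have "(map_mat of_int A *\<^sub>v v) $ i = (\<Sum>j<m. of_int (c i (xs ! j)) * xs ! j)"
      using i by (simp add: A_def v_def mult_mat_vec_def scalar_prod_def atLeast0LessThan)
    also have "\<dots> = d * xs ! i"
      using c i sum_G[of "\<lambda>g. of_int (c i g) * g"] by simp
    finally show "(map_mat of_int A *\<^sub>v v) $ i = (d \<cdot>\<^sub>v v) $ i"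
      using i by (simp add: v_def)
  qed (simp add: A_def v_def)
  moreover have "v \<noteq> 0\<^sub>v m"
  proof
    assume "v = 0\<^sub>v m"
    moreover obtain i where "i < m" "xs ! i = g0"
      using g0 xs unfolding m_def by (metis in_set_conv_nth)
    ultimately have "g0 = 0"
      unfolding v_def by (metis index_vec index_zero_vec(1))
    then show False
      using g0 by simp
  qed
  ultimately have "eigenvector (map_mat of_int A) v d"
    unfolding eigenvector_def using A by (simp add: v_def)
  then have "eigenvalue (map_mat of_int A) d"
    unfolding eigenvalue_def by blast
  then show ?thesis
    by (rule algebraic_int_if_eigenvalue_of_int_mat[OF A])
qed

lemma algebraic_int_prod_if_int_span_cycle:
  fixes R :: "nat \<Rightarrow> 'a::field_char_0 set" and \<beta> :: "nat \<Rightarrow> 'a"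
  assumes fin: "finite (R 0)" and cycle: "R p = R 0"
    and step: "\<And>j r. j < p \<Longrightarrow> r \<in> R j \<Longrightarrow> \<beta> j * r \<in> int_span (R (Suc j))"
    and y: "y \<in> int_span (R 0)" "y \<noteq> 0"
  shows "algebraic_int (\<Prod>j<p. \<beta> j)"
proof -
  have partial: "(\<Prod>i<j. \<beta> i) * r \<in> int_span (R j)" if "j \<le> p" "r \<in> int_span (R 0)" for j r
    using that(1)
  proof (induction j)
    case 0
    then show ?case
      using that(2) by simp
  next
    case (Suc j)
    have "\<beta> j * g \<in> int_span (R (Suc j))" if "g \<in> R j" for g
      using step[OF _ that] Suc.prems by simp
    moreover have "(\<Prod>i<j. \<beta> i) * r \<in> int_span (R j)"
      using Suc by simp
    ultimately have "\<beta> j * ((\<Prod>i<j. \<beta> i) * r) \<in> int_span (R (Suc j))"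
      by (rule int_span_mult_closed)
    then show ?case
      by (simp add: mult_ac)
  qed
  obtain g0 where g0: "g0 \<in> R 0" "g0 \<noteq> 0"
    using int_span_nonzero_imp_nonzero_base[OF y] .
  have "(\<Prod>j<p. \<beta> j) * r \<in> int_span (R 0)" if "r \<in> R 0" for r
    using partial[of p r] int_span_base[OF fin that] cycle by simp
  then show ?thesis
    using algebraic_int_if_int_span_stable[OF fin _ g0] by blast
qed

section \<open>Greedy remainders in an alternate base\<close>

lemma alt_base_length_pos: "alt_base bs \<Longrightarrow> 0 < length bs"
  unfolding alt_base_def by simp

lemma alt_beta_in_set: "alt_base bs \<Longrightarrow> alt_beta bs k \<in> set bs"
  unfolding alt_base_def alt_beta_def by simp

lemma alt_base_Min_gt_1: "alt_base bs \<Longrightarrow> 1 < Min (set bs)"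
  unfolding alt_base_def by (subst Min_gr_iff) auto

lemma alt_beta_ge_Min: "alt_base bs \<Longrightarrow> Min (set bs) \<le> alt_beta bs k"
  by (simp add: alt_beta_in_set)

lemma alt_beta_gt_1: "alt_base bs \<Longrightarrow> 1 < alt_beta bs k"
  using alt_base_Min_gt_1 alt_beta_ge_Min by (metis less_le_trans)

lemma alt_beta_cong: "j mod length bs = n mod length bs \<Longrightarrow> alt_beta bs j = alt_beta bs n"
  unfolding alt_beta_def by simp

lemma alt_rem_bounds: "0 \<le> x \<Longrightarrow> x < 1 \<Longrightarrow> 0 \<le> alt_rem bs x n \<and> alt_rem bs x n < 1"
proof (induction n)
  case (Suc n)
  show ?case by simp linarith
qed simp

lemma alt_beta_mult_alt_rem:
  "alt_beta bs n * alt_rem bs x n = alt_rem bs x (Suc n) + of_int (alt_digit bs x n)"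
  by (simp add: alt_digit_def)

text \<open>Equal bases and digits make the difference of the remainders grow by a factor of at least
  min bs > 1 per step, while it stays in (-1, 1).\<close>
lemma alt_rem_eq_if_same_digits:
  assumes bs: "alt_base bs" and x: "0 \<le> x" "x < 1" and y: "0 \<le> y" "y < 1"
    and beta: "\<And>k. alt_beta bs (m + k) = alt_beta bs (n + k)"
    and digits: "\<And>k. alt_digit bs y (m + k) = alt_digit bs x (n + k)"
  shows "alt_rem bs y m = alt_rem bs x n"
proof (rule ccontr)
  define b where "b = Min (set bs)"
  define D where "D k = alt_rem bs y (m + k) - alt_rem bs x (n + k)" for k
  have b: "1 < b" "\<And>k. b \<le> alt_beta bs k"
    unfolding b_def using alt_base_Min_gt_1 alt_beta_ge_Min bs by auto
  assume "alt_rem bs y m \<noteq> alt_rem bs x n"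
  then have D0: "D 0 \<noteq> 0"
    by (simp add: D_def)
  have D_Suc: "D (Suc k) = alt_beta bs (n + k) * D k" for k
    using alt_beta_mult_alt_rem[of bs "m + k" y] alt_beta_mult_alt_rem[of bs "n + k" x]
      beta[of k] digits[of k]
    by (simp add: D_def algebra_simps del: alt_rem.simps)
  have D_grows: "b ^ k * \<bar>D 0\<bar> \<le> \<bar>D k\<bar>" for k
  proof (induction k)
    case (Suc k)
    have "b ^ Suc k * \<bar>D 0\<bar> = b * (b ^ k * \<bar>D 0\<bar>)"
      by simp
    also have "\<dots> \<le> alt_beta bs (n + k) * \<bar>D k\<bar>"
      using Suc b(1) b(2)[of "n + k"] by (intro mult_mono) auto
    also have "\<dots> = \<bar>D (Suc k)\<bar>"
      using D_Suc[of k] b(1) b(2)[of "n + k"] by (simp add: abs_mult)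
    finally show ?case .
  qed simp
  obtain k where "1 / \<bar>D 0\<bar> < b ^ k"
    using real_arch_pow[OF b(1)] by blast
  then have "1 < b ^ k * \<bar>D 0\<bar>"
    using D0 by (simp add: field_simps)
  then have "1 < \<bar>D k\<bar>"
    using D_grows[of k] by linarith
  moreover have "\<bar>D k\<bar> < 1"
    using alt_rem_bounds[OF x, of bs "n + k"] alt_rem_bounds[OF y, of bs "m + k"]
    unfolding D_def by linarith
  ultimately show False
    by simp
qed

lemma finite_range_if_periodic_from:
  fixes f :: "nat \<Rightarrow> 'a"
  assumes P: "0 < P" and periodic: "\<And>n. N \<le> n \<Longrightarrow> f (n + P) = f n"
  shows "finite (range f)"
proof -
  have "f k \<in> f ` {..<N + P}" for k
  proof (induction k rule: less_induct)
    case (less k)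
    show ?case
    proof (cases "k < N + P")
      case False
      then have "f k = f (k - P)"
        using periodic[of "k - P"] by simp
      then show ?thesis
        using less[of "k - P"] P False by simp
    qed simp
  qed
  then have "range f \<subseteq> f ` {..<N + P}"
    by blast
  then show ?thesis
    using finite_subset by blast
qed

lemma periodic_from_mult:
  fixes a :: "nat \<Rightarrow> 'a" and T :: nat
  assumes "\<And>n. N \<le> n \<Longrightarrow> a (n + T) = a n" "N \<le> n"
  shows "a (n + j * T) = a n"
proof (induction j)
  case (Suc j)
  have "a (n + Suc j * T) = a (n + j * T + T)"
    by (simp add: algebra_simps)
  also have "\<dots> = a (n + j * T)"
    using assms by simp
  finally show ?case
    using Suc by simp
qed simp

lemma finite_range_alt_rem:
  assumes bs: "alt_base bs" and x: "0 \<le> x" "x < 1"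
    and periodic: "eventually_periodic (alt_digit bs x)"
  shows "finite (range (alt_rem bs x))"
proof -
  obtain N T where "0 < T" and T: "\<And>n. N \<le> n \<Longrightarrow> alt_digit bs x (n + T) = alt_digit bs x n"
    using periodic unfolding eventually_periodic_def by blast
  define P where "P = length bs * T"
  have "0 < P"
    using \<open>0 < T\<close> alt_base_length_pos[OF bs] by (simp add: P_def)
  moreover have "alt_rem bs x (n + P) = alt_rem bs x n" if "N \<le> n" for n
  proof (rule alt_rem_eq_if_same_digits[OF bs x x])
    fix k
    have "(n + P + k) mod length bs = (n + k + length bs * T) mod length bs"
      by (simp add: P_def algebra_simps)
    also have "\<dots> = (n + k) mod length bs"
      by (rule mod_mult_self2)
    finally show "alt_beta bs (n + P + k) = alt_beta bs (n + k)"
      by (rule alt_beta_cong)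
    show "alt_digit bs x (n + P + k) = alt_digit bs x (n + k)"
      using periodic_from_mult[of N "alt_digit bs x" T "n + k" "length bs"] T that
      by (simp add: P_def algebra_simps)
  qed
  ultimately show ?thesis
    by (rule finite_range_if_periodic_from)
qed

section \<open>Small rationals\<close>

definition alt_prod :: "real list \<Rightarrow> nat \<Rightarrow> real" where
  "alt_prod bs k = (\<Prod>i<k. alt_beta bs i)"

lemma alt_prod_0 [simp]: "alt_prod bs 0 = 1"
  by (simp add: alt_prod_def)

lemma alt_prod_Suc: "alt_prod bs (Suc k) = alt_prod bs k * alt_beta bs k"
  by (simp add: alt_prod_def)

lemma alt_prod_pos: "alt_base bs \<Longrightarrow> 0 < alt_prod bs k"
  unfolding alt_prod_def using alt_beta_gt_1 by (smt (verit) prod_pos)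

lemma alt_prod_mono:
  assumes "alt_base bs" "k \<le> n"
  shows "alt_prod bs k \<le> alt_prod bs n"
proof -
  have "alt_prod bs k \<le> alt_prod bs (Suc k)" for k
    using alt_prod_pos[OF assms(1), of k] alt_beta_gt_1[OF assms(1), of k]
    by (simp add: alt_prod_Suc)
  then show ?thesis
    using assms(2) by (rule lift_Suc_mono_le)
qed

lemma alt_prod_ge_power: "alt_base bs \<Longrightarrow> Min (set bs) ^ k \<le> alt_prod bs k"
proof (induction k)
  case (Suc k)
  have "1 < Min (set bs)" "Min (set bs) \<le> alt_beta bs k"
    using alt_base_Min_gt_1 alt_beta_ge_Min Suc.prems by auto
  then have "Min (set bs) * Min (set bs) ^ k \<le> alt_beta bs k * alt_prod bs k"
    using Suc by (intro mult_mono) auto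
  then show ?case
    by (simp add: alt_prod_Suc mult.commute)
qed simp

lemma alt_prod_length: "alt_prod bs (length bs) = prod_list bs"
  by (simp add: alt_prod_def alt_beta_def prod.list_conv_set_nth atLeast0LessThan)

lemma alt_rem_eq_alt_prod_mult:
  assumes bs: "alt_base bs" and x: "0 \<le> x" and small: "alt_prod bs n * x < 1" and "k \<le> n"
  shows "alt_rem bs x k = alt_prod bs k * x"
  using \<open>k \<le> n\<close>
proof (induction k)
  case (Suc k)
  have "alt_prod bs (Suc k) * x \<le> alt_prod bs n * x"
    using alt_prod_mono[OF bs Suc.prems] x by (rule mult_right_mono)
  moreover have "0 \<le> alt_prod bs (Suc k) * x"
    using alt_prod_pos[OF bs, of "Suc k"] x by simp
  ultimately have "\<lfloor>alt_prod bs (Suc k) * x\<rfloor> = 0"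
    using small by (simp add: floor_eq_iff)
  then show ?case
    using Suc by (simp add: alt_prod_Suc mult_ac)
qed simp

lemma alt_rem_Suc_first_carry:
  assumes bs: "alt_base bs" and x: "0 \<le> x" and small: "alt_prod bs n * x < 1"
    and carry: "1 \<le> alt_prod bs (Suc n) * x" "alt_prod bs (Suc n) * x < 2"
  shows "alt_rem bs x (Suc n) = alt_prod bs (Suc n) * x - 1"
proof -
  have "alt_beta bs n * alt_rem bs x n = alt_prod bs (Suc n) * x"
    using alt_rem_eq_alt_prod_mult[OF bs x small order.refl] by (simp add: alt_prod_Suc mult_ac)
  moreover have "\<lfloor>alt_prod bs (Suc n) * x\<rfloor> = 1"
    using carry by (simp add: floor_eq_iff)
  ultimately show ?thesis
    by simp
qed

lemma exists_fraction_in_window: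
  fixes A B :: real
  assumes A: "0 < A" and AB: "A < B"
  obtains q m :: nat where "B < q" "1 \<le> B * (m / q)" "B * (m / q) < 2" "A * (m / q) < 1"
proof -
  define u where "u = min (1 / A) (2 / B)"
  have B: "0 < B"
    using A AB by simp
  have "1 / B < u"
    unfolding u_def using A AB by (simp add: frac_less2 divide_strict_right_mono)
  then obtain q :: nat where q: "max B (1 / (u - 1 / B)) < q"
    using reals_Archimedean2 by blast
  then have qB: "B < q" and q_pos: "0 < real q" and q_small: "1 / q < u - 1 / B"
    using B \<open>1 / B < u\<close> by (auto simp: field_simps)
  define m where "m = nat \<lceil>q / B\<rceil>"
  have "real m = of_int \<lceil>q / B\<rceil>"
    using q_pos B unfolding m_def by simp
  then have m: "q / B \<le> m" "m < q / B + 1"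
    by linarith+
  have "1 \<le> B * (m / q)"
    using m(1) q_pos B by (simp add: field_simps)
  moreover have "m / q < u"
  proof -
    have "m / q < (q / B + 1) / q"
      using m(2) q_pos by (simp add: divide_strict_right_mono)
    also have "\<dots> = 1 / B + 1 / q"
      using q_pos B by (simp add: field_simps)
    finally show ?thesis
      using q_small by simp
  qed
  then have "B * (m / q) < 2" "A * (m / q) < 1"
    using A B unfolding u_def by (simp_all add: field_simps)
  ultimately show ?thesis
    using that qB by blast
qed

text \<open>With x = 1/q and y = m/q chosen so that y triggers its first carry at position n + 1 while x
  does not, the remainders there are B/q and mB/q - 1, where B = alt_prod bs (n + 1).\<close>
lemma one_eq_int_comb_alt_rem:
  assumes bs: "alt_base bs" and large: "1 \<le> g * alt_prod bs n"
  obtains x y :: real and m :: int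
  where "x \<in> \<rat>" "0 \<le> x" "x < g" "y \<in> \<rat>" "0 \<le> y" "y < g"
    "of_int m * alt_rem bs x (Suc n) - alt_rem bs y (Suc n) = 1"
proof -
  define A where "A = alt_prod bs n"
  define B where "B = alt_prod bs (Suc n)"
  have A: "0 < A"
    unfolding A_def by (rule alt_prod_pos[OF bs])
  have "A < B"
    using A alt_beta_gt_1[OF bs, of n] by (simp add: A_def B_def alt_prod_Suc)
  then obtain q m :: nat where
    q: "B < q" and m: "1 \<le> B * (m / q)" "B * (m / q) < 2" "A * (m / q) < 1"
    using exists_fraction_in_window[OF A] by blast
  define x where "x = 1 / real q"
  define y where "y = m / real q"
  have q_pos: "0 < real q"
    using A \<open>A < B\<close> q by linarith
  have "1 / A \<le> g"
    using large A by (simp add: A_def field_simps)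
  have "B * x < 1"
    using q q_pos by (simp add: x_def field_simps)
  then have rx: "alt_rem bs x (Suc n) = B * x"
    unfolding B_def by (intro alt_rem_eq_alt_prod_mult[OF bs]) (auto simp: x_def)
  have ry: "alt_rem bs y (Suc n) = B * y - 1"
    unfolding B_def using m
    by (intro alt_rem_Suc_first_carry[OF bs]) (auto simp: y_def A_def B_def)
  have "x < 1 / A"
    using \<open>B * x < 1\<close> \<open>A < B\<close> A q_pos by (simp add: x_def field_simps)
  moreover have "y < 1 / A"
    using m(3) A by (simp add: y_def field_simps)
  moreover have "of_int (int m) * alt_rem bs x (Suc n) - alt_rem bs y (Suc n) = 1"
    unfolding rx ry using q_pos by (simp add: x_def y_def field_simps)
  ultimately show ?thesis
    using that[of x y "int m"] \<open>1 / A \<le> g\<close> by (simp add: x_def y_def)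
qed

lemma exists_large_alt_prod_in_class:
  assumes bs: "alt_base bs"
  obtains n where "Suc n mod length bs = s mod length bs" "C \<le> alt_prod bs n"
proof -
  define p where "p = length bs"
  have p: "0 < p"
    unfolding p_def by (rule alt_base_length_pos[OF bs])
  obtain K where K: "C < Min (set bs) ^ K"
    using real_arch_pow[OF alt_base_Min_gt_1[OF bs]] by blast
  define n where "n = K * p + (p + s mod p - 1)"
  have "Suc n = s mod p + Suc K * p"
    using p unfolding n_def by simp
  then have "Suc n mod p = s mod p mod p"
    by (simp only: mod_mult_self1)
  then have "Suc n mod p = s mod p"
    by simp
  moreover have "Min (set bs) ^ K \<le> alt_prod bs n"
  proof -
    have "K \<le> K * p"
      using p by simp
    then have "K \<le> n"
      unfolding n_def by linarith
    then show ?thesis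
      using alt_prod_ge_power[OF bs, of K] alt_prod_mono[OF bs] by (meson order_trans)
  qed
  ultimately show ?thesis
    using that K unfolding p_def by (meson less_imp_le order_trans)
qed

section \<open>Remainder classes modulo the period\<close>

definition alt_rem_class :: "real list \<Rightarrow> real set \<Rightarrow> nat \<Rightarrow> real set" where
  "alt_rem_class bs X j = {alt_rem bs x n | x n. x \<in> X \<and> n mod length bs = j mod length bs}"

lemma alt_rem_in_alt_rem_class:
  "x \<in> X \<Longrightarrow> n mod length bs = j mod length bs \<Longrightarrow> alt_rem bs x n \<in> alt_rem_class bs X j"
  unfolding alt_rem_class_def by blast

lemma alt_rem_class_length: "alt_rem_class bs X (length bs) = alt_rem_class bs X 0"
  by (simp add: alt_rem_class_def)

lemma finite_alt_rem_class:
  assumes "finite X" "\<And>x. x \<in> X \<Longrightarrow> finite (range (alt_rem bs x))"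
  shows "finite (alt_rem_class bs X j)"
proof -
  have "alt_rem_class bs X j \<subseteq> (\<Union>x\<in>X. range (alt_rem bs x))"
    unfolding alt_rem_class_def by blast
  then show ?thesis
    by (rule finite_subset[OF _ finite_UN_I[OF assms]])
qed

lemma one_in_int_span_alt_rem_class:
  assumes fin: "finite (alt_rem_class bs X j)" and xy: "x \<in> X" "y \<in> X"
    and n: "n mod length bs = j mod length bs"
    and one: "of_int m * alt_rem bs x n - alt_rem bs y n = 1"
  shows "1 \<in> int_span (alt_rem_class bs X j)"
proof -
  have "of_int m * alt_rem bs x n - alt_rem bs y n \<in> int_span (alt_rem_class bs X j)"
    by (intro int_span_diff int_span_of_int_mult int_span_base[OF fin]
        alt_rem_in_alt_rem_class xy n)
  then show ?thesis
    by (simp only: one)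
qed

lemma alt_beta_mult_alt_rem_class:
  assumes fin: "finite (alt_rem_class bs X (Suc j))"
    and one: "1 \<in> int_span (alt_rem_class bs X (Suc j))"
    and r: "r \<in> alt_rem_class bs X j"
  shows "alt_beta bs j * r \<in> int_span (alt_rem_class bs X (Suc j))"
proof -
  obtain x n where x: "x \<in> X" and rn: "r = alt_rem bs x n"
    and n: "n mod length bs = j mod length bs"
    using r unfolding alt_rem_class_def by blast
  have "Suc n mod length bs = Suc j mod length bs"
    using n by (metis mod_Suc_eq)
  then have "alt_rem bs x (Suc n) \<in> int_span (alt_rem_class bs X (Suc j))"
    by (intro int_span_base[OF fin] alt_rem_in_alt_rem_class x)
  moreover have "of_int (alt_digit bs x n) * 1 \<in> int_span (alt_rem_class bs X (Suc j))"
    by (rule int_span_of_int_mult[OF one])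
  moreover have "alt_beta bs j * r = alt_rem bs x (Suc n) + of_int (alt_digit bs x n) * 1"
    using alt_beta_mult_alt_rem[of bs n x] alt_beta_cong[OF n] rn by (simp del: alt_rem.simps)
  ultimately show ?thesis
    by (simp only: int_span_add)
qed

lemma exists_small_rationals_one_in_int_span:
  assumes bs: "alt_base bs" and g: "0 < g"
  obtains X where "finite X" "X \<subseteq> {x \<in> \<rat>. 0 \<le> x \<and> x < g}"
    "\<And>j. finite (alt_rem_class bs X j) \<Longrightarrow> 1 \<in> int_span (alt_rem_class bs X j)"
proof -
  define small where "small x \<longleftrightarrow> x \<in> \<rat> \<and> 0 \<le> x \<and> x < g" for x :: real
  have "\<exists>xy. small (fst xy) \<and> small (snd xy) \<and> (\<exists>n (m::int). n mod length bs = s mod length bs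
          \<and> of_int m * alt_rem bs (fst xy) n - alt_rem bs (snd xy) n = 1)" for s
  proof -
    obtain n where n: "Suc n mod length bs = s mod length bs" "1 / g \<le> alt_prod bs n"
      using exists_large_alt_prod_in_class[OF bs] by blast
    then have "1 \<le> g * alt_prod bs n"
      using g by (simp add: field_simps)
    then obtain x y m where "small x" "small y"
      "of_int m * alt_rem bs x (Suc n) - alt_rem bs y (Suc n) = 1"
      using one_eq_int_comb_alt_rem[OF bs] unfolding small_def by metis
    then show ?thesis
      using n(1) by (intro exI[of _ "(x, y)"]) (auto simp del: alt_rem.simps)
  qed
  then obtain f where f: "\<And>s. small (fst (f s)) \<and> small (snd (f s)) \<and>
      (\<exists>n (m::int). n mod length bs = s mod length bs
        \<and> of_int m * alt_rem bs (fst (f s)) n - alt_rem bs (snd (f s)) n = 1)"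
    by metis
  define X where "X = (fst \<circ> f) ` {..<length bs} \<union> (snd \<circ> f) ` {..<length bs}"
  have "finite X"
    unfolding X_def by simp
  moreover have "X \<subseteq> {x \<in> \<rat>. 0 \<le> x \<and> x < g}"
    using f unfolding X_def small_def by auto
  moreover have "1 \<in> int_span (alt_rem_class bs X j)" if fin: "finite (alt_rem_class bs X j)" for j
  proof -
    define s where "s = j mod length bs"
    have "s < length bs"
      using alt_base_length_pos[OF bs] by (simp add: s_def)
    then have xy: "fst (f s) \<in> X" "snd (f s) \<in> X"
      unfolding X_def by auto
    obtain n m where n: "n mod length bs = s mod length bs"
      and one: "of_int m * alt_rem bs (fst (f s)) n - alt_rem bs (snd (f s)) n = 1"
      using f[of s] by blast
    from n have "n mod length bs = j mod length bs"
      by (simp add: s_def)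
    from one_in_int_span_alt_rem_class[OF fin xy this one] show ?thesis .
  qed
  ultimately show ?thesis
    by (rule that)
qed

theorem lemma3:
  fixes bs :: "real list" and \<gamma> :: real
  assumes "alt_base bs"
    and "\<gamma> > 0"
    and "\<And>x. x \<in> \<rat> \<Longrightarrow> 0 \<le> x \<Longrightarrow> x < \<gamma> \<Longrightarrow> x < 1 \<Longrightarrow> eventually_periodic (alt_digit bs x)"
  shows "algebraic_int (prod_list bs)"
proof -
  have g: "0 < min \<gamma> 1"
    using assms(2) by simp
  obtain X where X: "finite X" "X \<subseteq> {x \<in> \<rat>. 0 \<le> x \<and> x < min \<gamma> 1}"
    and one_in_span: "\<And>j. finite (alt_rem_class bs X j) \<Longrightarrow> 1 \<in> int_span (alt_rem_class bs X j)"
    using exists_small_rationals_one_in_int_span[OF assms(1) g] by blast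
  define R where "R = alt_rem_class bs X"
  have "finite (range (alt_rem bs x))" if "x \<in> X" for x
    using X(2) that by (intro finite_range_alt_rem[OF assms(1)] assms(3)) auto
  then have fin: "finite (R j)" for j
    unfolding R_def by (rule finite_alt_rem_class[OF X(1)])
  have one: "1 \<in> int_span (R j)" for j
    using one_in_span fin unfolding R_def by blast
  have "algebraic_int (\<Prod>j<length bs. alt_beta bs j)"
  proof (rule algebraic_int_prod_if_int_span_cycle[where y = 1])
    show "R (length bs) = R 0"
      unfolding R_def by (rule alt_rem_class_length)
    show "alt_beta bs j * r \<in> int_span (R (Suc j))" if "r \<in> R j" for j r
      using alt_beta_mult_alt_rem_class[of bs X j, folded R_def, OF fin one that] .
    show "finite (R 0)" "1 \<in> int_span (R 0)"
      by (rule fin, rule one)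
  qed simp
  then show ?thesis
    using alt_prod_length[of bs] by (simp add: alt_prod_def)
qed

end
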